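(* Let $S$ be an MPD-semigroup in $\mathbb N^d$ and let $\mathbf f$ be a Frobenius element of $S$. Then there exists a term order $\prec$ on $\mathbb N^d$ such that $\mathbf f=\max_\prec\mathrm{Ap}(S,\mathbf b)-\mathbf b$ for every $\mathbf b\in S\setminus\{0\}$.
   Context: $S$ is generated by finitely many $\mathbf a_1,\dots,\mathbf a_n\in\mathbb N^d$ and is an MPD-semigroup if, for a field $\Bbbk$, the $\Bbbk[x_1,\dots,x_n]$-module $\Bbbk[S]$ (via $x_i\mapsto\chi^{\mathbf a_i}$) has depth $1$. $\mathrm{pos}(S)=\{\sum_i\lambda_i\mathbf a_i:\lambda_i\in\mathbb Q_{\ge0}\}$, $\mathcal H(S)=(\mathrm{pos}(S)\setminus S)\cap\mathbb N^d$. A term order on $\mathbb N^d$ is a total order compatible with addition with $0$ least; $\mathbf f\in\mathcal H(S)$ is a Frobenius element if $\mathbf f=\max_\prec\mathcal H(S)$ for some term order $\prec$. For $\mathbf b\in S\setminus\{0\}$, the Apéry set is $\mathrm{Ap}(S,\mathbf b)=\{\mathbf a\in S: \mathbf a-\mathbf b\in\mathrm{pos}(S)\setminus S\}$. *)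

theory Defs
  imports Main "HOL-Library.Extended_Nat"
begin

(* Vectors of N^d are functions 'i => nat for a finite index type 'i (d = CARD('i)).
   The generators a_1,...,a_n are given as a list A (n = length A). *)

definition vadd :: "('i \<Rightarrow> nat) \<Rightarrow> ('i \<Rightarrow> nat) \<Rightarrow> ('i \<Rightarrow> nat)" where
  "vadd u v = (\<lambda>t. u t + v t)"

(* image of a monomial exponent alpha under x_j |-> chi^(a_j) *)
definition expo :: "('i \<Rightarrow> nat) list \<Rightarrow> (nat \<Rightarrow> nat) \<Rightarrow> ('i \<Rightarrow> nat)" where
  "expo A \<alpha> = (\<lambda>t. \<Sum>j<length A. \<alpha> j * (A ! j) t)"

definition semigroup_gen :: "('i \<Rightarrow> nat) list \<Rightarrow> ('i \<Rightarrow> nat) set" where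
  "semigroup_gen A = {expo A c | c. True}"

definition posQ :: "('i \<Rightarrow> nat) list \<Rightarrow> ('i \<Rightarrow> rat) set" where
  "posQ A = {x. \<exists>c::nat \<Rightarrow> rat. (\<forall>j<length A. c j \<ge> 0) \<and>
                 x = (\<lambda>t. \<Sum>j<length A. c j * of_nat ((A ! j) t))}"

definition ratv :: "('i \<Rightarrow> nat) \<Rightarrow> ('i \<Rightarrow> rat)" where
  "ratv v = (\<lambda>t. of_nat (v t))"

definition holes :: "('i \<Rightarrow> nat) list \<Rightarrow> ('i \<Rightarrow> nat) set" where
  "holes A = {v. ratv v \<in> posQ A \<and> v \<notin> semigroup_gen A}"

definition apery :: "('i \<Rightarrow> nat) list \<Rightarrow> ('i \<Rightarrow> nat) \<Rightarrow> ('i \<Rightarrow> nat) set" where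
  "apery A b = {a \<in> semigroup_gen A.
      (\<lambda>t. ratv a t - ratv b t) \<in> posQ A \<and>
      (\<lambda>t. ratv a t - ratv b t) \<notin> ratv ` semigroup_gen A}"

definition term_order :: "(('i \<Rightarrow> nat) \<Rightarrow> ('i \<Rightarrow> nat) \<Rightarrow> bool) \<Rightarrow> bool" where
  "term_order le \<longleftrightarrow>
     (\<forall>x. le x x) \<and> (\<forall>x y. le x y \<and> le y x \<longrightarrow> x = y) \<and>
     (\<forall>x y z. le x y \<and> le y z \<longrightarrow> le x z) \<and> (\<forall>x y. le x y \<or> le y x) \<and>
     (\<forall>x y z. le x y \<longrightarrow> le (vadd x z) (vadd y z)) \<and>
     (\<forall>x. le (\<lambda>_. 0) x)"

definition is_max :: "('a \<Rightarrow> 'a \<Rightarrow> bool) \<Rightarrow> 'a set \<Rightarrow> 'a \<Rightarrow> bool" where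
  "is_max le X x \<longleftrightarrow> x \<in> X \<and> (\<forall>y\<in>X. le y x)"

definition frobenius_element :: "('i \<Rightarrow> nat) list \<Rightarrow> ('i \<Rightarrow> nat) \<Rightarrow> bool" where
  "frobenius_element A f \<longleftrightarrow> (\<exists>le. term_order le \<and> is_max le (holes A) f)"

(* polynomials in x_0..x_{n-1}: finitely supported coefficient functions on exponent vectors
   nat => nat vanishing from index n on *)
definition polys :: "nat \<Rightarrow> ((nat \<Rightarrow> nat) \<Rightarrow> 'k::field) set" where
  "polys n = {p. finite {\<alpha>. p \<alpha> \<noteq> 0} \<and> (\<forall>\<alpha>. p \<alpha> \<noteq> 0 \<longrightarrow> (\<forall>j\<ge>n. \<alpha> j = 0))}"

definition max_ideal :: "nat \<Rightarrow> ((nat \<Rightarrow> nat) \<Rightarrow> 'k::field) set" where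
  "max_ideal n = {p \<in> polys n. p (\<lambda>_. 0) = 0}"

(* k[S] = finitely supported k-combinations of chi^s, s in S *)
definition semigroup_ring :: "('i \<Rightarrow> nat) list \<Rightarrow> (('i \<Rightarrow> nat) \<Rightarrow> 'k::field) set" where
  "semigroup_ring A = {m. finite {v. m v \<noteq> 0} \<and> {v. m v \<noteq> 0} \<subseteq> semigroup_gen A}"

(* module action p . m, via x_j |-> chi^(a_j) *)
definition act :: "('i \<Rightarrow> nat) list \<Rightarrow> ((nat \<Rightarrow> nat) \<Rightarrow> 'k::field) \<Rightarrow> (('i \<Rightarrow> nat) \<Rightarrow> 'k)
                    \<Rightarrow> (('i \<Rightarrow> nat) \<Rightarrow> 'k)" where
  "act A p m = (\<lambda>v. \<Sum>(\<alpha>, w) \<in> {(\<alpha>, w). p \<alpha> \<noteq> 0 \<and> m w \<noteq> 0 \<and> vadd w (expo A \<alpha>) = v}.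
                       p \<alpha> * m w)"

definition ideal_times_module :: "('i \<Rightarrow> nat) list \<Rightarrow> ((nat \<Rightarrow> nat) \<Rightarrow> 'k::field) list
                                   \<Rightarrow> (('i \<Rightarrow> nat) \<Rightarrow> 'k) set" where
  "ideal_times_module A fs =
     {(\<lambda>v. \<Sum>j<length fs. act A (fs ! j) (ms j) v) | ms. \<forall>j<length fs. ms j \<in> semigroup_ring A}"

definition regular_sequence :: "('i \<Rightarrow> nat) list \<Rightarrow> ((nat \<Rightarrow> nat) \<Rightarrow> 'k::field) list \<Rightarrow> bool" where
  "regular_sequence A fs \<longleftrightarrow>
     set fs \<subseteq> max_ideal (length A) \<and>
     ideal_times_module A fs \<noteq> semigroup_ring A \<and>
     (\<forall>i<length fs. \<forall>m\<in>semigroup_ring A.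
         act A (fs ! i) m \<in> ideal_times_module A (take i fs) \<longrightarrow>
         m \<in> ideal_times_module A (take i fs))"

definition depth_semigroup_ring :: "'k::field itself \<Rightarrow> ('i \<Rightarrow> nat) list \<Rightarrow> enat" where
  "depth_semigroup_ring K A =
     Sup {enat (length fs) | fs :: ((nat \<Rightarrow> nat) \<Rightarrow> 'k) list. regular_sequence A fs}"

definition MPD_semigroup :: "'k::field itself \<Rightarrow> ('i \<Rightarrow> nat) list \<Rightarrow> bool" where
  "MPD_semigroup K A \<longleftrightarrow> depth_semigroup_ring K A = 1"

end

theory Submission
  imports Defs
begin

text \<open>For every nonzero b in S, Ap(S,b) - b consists of holes, so its maximum is bounded by
  the Frobenius element f; conversely f + b lies in pos(S), and it cannot be a hole because it
  exceeds the maximal hole f in any term order. Hence f + b is the maximum of Ap(S,b) in the very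
  term order that makes f the Frobenius element.\<close>

lemma posQ_nonneg: "x \<in> posQ A \<Longrightarrow> 0 \<le> x t"
  unfolding posQ_def by (auto intro!: sum_nonneg)

lemma posQ_add:
  assumes "x \<in> posQ A" "y \<in> posQ A"
  shows "(\<lambda>t. x t + y t) \<in> posQ A"
proof -
  obtain c where c: "\<forall>j<length A. 0 \<le> c j" "x = (\<lambda>t. \<Sum>j<length A. c j * of_nat ((A ! j) t))"
    using assms(1) unfolding posQ_def by blast
  obtain d where d: "\<forall>j<length A. 0 \<le> d j" "y = (\<lambda>t. \<Sum>j<length A. d j * of_nat ((A ! j) t))"
    using assms(2) unfolding posQ_def by blast
  show ?thesis
    unfolding posQ_def
    by (intro CollectI exI[of _ "\<lambda>j. c j + d j"]) (auto simp: c d distrib_right sum.distrib)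
qed

lemma ratv_semigroup_gen_in_posQ:
  assumes "b \<in> semigroup_gen A"
  shows "ratv b \<in> posQ A"
proof -
  obtain c where "b = expo A c"
    using assms unfolding semigroup_gen_def by blast
  then show ?thesis
    unfolding posQ_def ratv_def expo_def by (intro CollectI exI[of _ "\<lambda>j. of_nat (c j)"]) auto
qed

lemma inj_ratv: "inj ratv"
  by (auto intro!: injI simp: ratv_def fun_eq_iff)

lemma ratv_vadd: "ratv (vadd u v) = (\<lambda>t. ratv u t + ratv v t)"
  by (simp add: ratv_def vadd_def)

lemma apery_eq: "apery A b = {a \<in> semigroup_gen A. \<exists>h\<in>holes A. a = vadd h b}"
proof (intro set_eqI iffI)
  fix a
  assume "a \<in> apery A b"
  then have aS: "a \<in> semigroup_gen A" and pos: "(\<lambda>t. ratv a t - ratv b t) \<in> posQ A"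
    and nS: "(\<lambda>t. ratv a t - ratv b t) \<notin> ratv ` semigroup_gen A"
    unfolding apery_def by auto
  have ge: "b t \<le> a t" for t
    using posQ_nonneg[OF pos, of t] by (simp add: ratv_def)
  define h where "h = (\<lambda>t. a t - b t)"
  have rh: "ratv h = (\<lambda>t. ratv a t - ratv b t)"
    using ge by (simp add: ratv_def h_def)
  have "h \<notin> semigroup_gen A"
    using nS unfolding rh[symmetric] by blast
  with pos rh have "h \<in> holes A"
    unfolding holes_def by simp
  moreover have "a = vadd h b"
    using ge by (simp add: vadd_def h_def fun_eq_iff)
  ultimately show "a \<in> {a \<in> semigroup_gen A. \<exists>h\<in>holes A. a = vadd h b}"
    using aS by blast
next
  fix a
  assume "a \<in> {a \<in> semigroup_gen A. \<exists>h\<in>holes A. a = vadd h b}"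
  then obtain h where aS: "a \<in> semigroup_gen A" and h: "h \<in> holes A" and a: "a = vadd h b"
    by blast
  have diff: "(\<lambda>t. ratv a t - ratv b t) = ratv h"
    by (simp add: a ratv_vadd)
  have "ratv h \<in> posQ A" and "h \<notin> semigroup_gen A"
    using h unfolding holes_def by auto
  moreover have "ratv h \<notin> ratv ` semigroup_gen A"
    using \<open>h \<notin> semigroup_gen A\<close> inj_ratv by (auto dest: injD)
  ultimately show "a \<in> apery A b"
    using aS unfolding apery_def mem_Collect_eq diff by blast
qed

lemma term_order_antisym: "term_order le \<Longrightarrow> le x y \<Longrightarrow> le y x \<Longrightarrow> x = y"
  unfolding term_order_def by blast

lemma term_order_vadd_mono: "term_order le \<Longrightarrow> le x y \<Longrightarrow> le (vadd x z) (vadd y z)"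
  unfolding term_order_def by blast

lemma term_order_le_vadd:
  assumes "term_order le"
  shows "le x (vadd x z)"
proof -
  have zero: "le (\<lambda>_. 0) z"
    using assms unfolding term_order_def by (elim conjE) (erule spec)
  have "vadd (\<lambda>_. 0) x = x" and "vadd z x = vadd x z"
    by (simp_all add: vadd_def add.commute)
  with term_order_vadd_mono[of le "\<lambda>_. 0" z x, OF assms zero] show ?thesis
    by (simp only:)
qed

lemma max_hole_vadd_in_semigroup_gen:
  assumes le: "term_order le" and f: "is_max le (holes A) f"
    and b: "b \<in> semigroup_gen A" "b \<noteq> (\<lambda>_. 0)"
  shows "vadd f b \<in> semigroup_gen A"
proof (rule ccontr)
  assume nS: "vadd f b \<notin> semigroup_gen A"
  have "ratv f \<in> posQ A"
    using f unfolding is_max_def holes_def by auto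
  then have "ratv (vadd f b) \<in> posQ A"
    unfolding ratv_vadd using posQ_add ratv_semigroup_gen_in_posQ[OF b(1)] by blast
  with nS have "le (vadd f b) f"
    using f unfolding is_max_def holes_def by blast
  then have "vadd f b = f"
    using term_order_antisym[OF le] term_order_le_vadd[OF le] by blast
  then have "b = (\<lambda>_. 0)"
    by (simp add: vadd_def fun_eq_iff)
  with b(2) show False ..
qed

lemma is_max_apery_vadd:
  assumes le: "term_order le" and f: "is_max le (holes A) f"
    and b: "b \<in> semigroup_gen A" "b \<noteq> (\<lambda>_. 0)"
  shows "is_max le (apery A b) (vadd f b)"
proof -
  have "vadd f b \<in> apery A b"
    using f max_hole_vadd_in_semigroup_gen[OF assms]
    unfolding apery_eq is_max_def by blast
  moreover have "le (vadd h b) (vadd f b)" if "h \<in> holes A" for h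
    using term_order_vadd_mono[OF le] f that unfolding is_max_def by blast
  ultimately show ?thesis
    unfolding is_max_def apery_eq by blast
qed

theorem theorem3p6:
  fixes A :: "('i::finite \<Rightarrow> nat) list" and f :: "'i \<Rightarrow> nat"
  assumes "MPD_semigroup TYPE('k::field) A"
    and "frobenius_element A f"
  shows "\<exists>le. term_order le \<and>
           (\<forall>b \<in> semigroup_gen A - {\<lambda>_. 0}. is_max le (apery A b) (vadd f b))"
proof -
  obtain le where "term_order le" and "is_max le (holes A) f"
    using assms(2) unfolding frobenius_element_def by blast
  then show ?thesis
    using is_max_apery_vadd by blast
qed

end
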